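(* Let $X\in L^2(\mathbb{R}^2)$ and suppose there is a nonzero $v\in L^2(\mathbb{R})$ with $\langle v,\mathcal{T}_Xv\rangle\ge0$. Then the problem $\min_{u\in L^2(\mathbb{R})}\frac12\|X-uu^*\|_{L^2(\mathbb{R}^2)}^2$ is equivalent to the problem $\max_{\|u\|_{L^2(\mathbb{R})}=1}\langle u,(\mathcal{T}_X+\mathcal{T}_X^* )u\rangle$; precisely, if $u$ is an optimal solution of the second problem, then $\big(\tfrac12\langle u,(\mathcal{T}_X+\mathcal{T}_X^* )u\rangle\big)uu^*$ is an optimal solution of the first problem (i.e., it equals $ww^*$ for a minimizer $w$ of the first problem).
   Context: For $X\in L^2(\mathbb{R}^2)$, $\mathcal{T}_X:L^2(\mathbb{R})\to L^2(\mathbb{R})$ is $\mathcal{T}_X[u](s)=\int_{\mathbb{R}}X(s,t)u(t)\,dt$, and $\mathcal{T}_X^*$ is its adjoint, $\mathcal{T}_X^*[u](t)=\int_{\mathbb{R}}X(s,t)u(s)\,ds$. For $u\in L^2(\mathbb{R})$, $uu^*$ is the function $(s,t)\mapsto u(s)u(t)$. *)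

theory Defs
  imports "HOL-Analysis.Analysis"
begin

text \<open>Real-valued L2 functions are represented by (Borel measurable, square integrable)
  functions; equality in L2 is almost-everywhere equality.\<close>

definition L2 :: "(real \<Rightarrow> real) \<Rightarrow> bool" where
  "L2 u \<longleftrightarrow> u \<in> borel_measurable lborel \<and> integrable lborel (\<lambda>x. (u x)^2)"

definition L2_2 :: "(real \<times> real \<Rightarrow> real) \<Rightarrow> bool" where
  "L2_2 X \<longleftrightarrow> X \<in> borel_measurable lborel \<and> integrable lborel (\<lambda>p. (X p)^2)"

definition inner_L2 :: "(real \<Rightarrow> real) \<Rightarrow> (real \<Rightarrow> real) \<Rightarrow> real" where
  "inner_L2 u v = (LINT x|lborel. u x * v x)"

definition norm_L2 :: "(real \<Rightarrow> real) \<Rightarrow> real" where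
  "norm_L2 u = sqrt (LINT x|lborel. (u x)^2)"

definition norm_L2_2 :: "(real \<times> real \<Rightarrow> real) \<Rightarrow> real" where
  "norm_L2_2 X = sqrt (LINT p|lborel. (X p)^2)"

definition T_op :: "(real \<times> real \<Rightarrow> real) \<Rightarrow> (real \<Rightarrow> real) \<Rightarrow> real \<Rightarrow> real" where
  "T_op X u s = (LINT t|lborel. X (s, t) * u t)"

definition T_adj :: "(real \<times> real \<Rightarrow> real) \<Rightarrow> (real \<Rightarrow> real) \<Rightarrow> real \<Rightarrow> real" where
  "T_adj X u t = (LINT s|lborel. X (s, t) * u s)"

definition outer :: "(real \<Rightarrow> real) \<Rightarrow> real \<times> real \<Rightarrow> real" where
  "outer u = (\<lambda>(s, t). u s * u t)"

definition obj1 :: "(real \<times> real \<Rightarrow> real) \<Rightarrow> (real \<Rightarrow> real) \<Rightarrow> real" where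
  "obj1 X u = (1/2) * (norm_L2_2 (\<lambda>p. X p - outer u p))^2"

definition obj2 :: "(real \<times> real \<Rightarrow> real) \<Rightarrow> (real \<Rightarrow> real) \<Rightarrow> real" where
  "obj2 X u = inner_L2 u (\<lambda>s. T_op X u s + T_adj X u s)"

definition is_min1 :: "(real \<times> real \<Rightarrow> real) \<Rightarrow> (real \<Rightarrow> real) \<Rightarrow> bool" where
  "is_min1 X w \<longleftrightarrow> L2 w \<and> (\<forall>w'. L2 w' \<longrightarrow> obj1 X w \<le> obj1 X w')"

definition is_max2 :: "(real \<times> real \<Rightarrow> real) \<Rightarrow> (real \<Rightarrow> real) \<Rightarrow> bool" where
  "is_max2 X u \<longleftrightarrow> L2 u \<and> norm_L2 u = 1 \<and>
     (\<forall>u'. L2 u' \<and> norm_L2 u' = 1 \<longrightarrow> obj2 X u' \<le> obj2 X u)"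

end

theory Submission
  imports Defs
begin

text \<open>Write Q(u) for the double integral of X(s,t) u(s) u(t). By Fubini both inner products
  <u, T_X u> and <u, T_X^* u> equal Q(u), so the second objective is 2 Q(u), while expanding
  the square gives 1/2 ||X - uu^*||^2 = 1/2 ||X||^2 - Q(u) + 1/2 ||u||^4. If u maximises Q on the
  unit sphere and a = Q(u), homogeneity of Q gives Q(w) <= a ||w||^2 for every w, and a >= 0
  because Q(v) >= 0 for some v \<noteq> 0. With m = ||w||^2 the first objective is therefore at least
  1/2 ||X||^2 - a m + 1/2 m^2 >= 1/2 ||X||^2 - 1/2 a^2, and this bound is attained by
  w = sqrt a u, for which ww^* = a uu^*.\<close>

definition kernel_form :: "(real \<times> real \<Rightarrow> real) \<Rightarrow> (real \<Rightarrow> real) \<Rightarrow> real" where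
  "kernel_form X u = (LINT p|(lborel \<Otimes>\<^sub>M lborel). X p * u (fst p) * u (snd p))"

lemma (in pair_sigma_finite) integrable_mult_fst_snd:
  fixes f g :: "_ \<Rightarrow> real"
  assumes f: "integrable M1 f" and g: "integrable M2 g"
  shows "integrable (M1 \<Otimes>\<^sub>M M2) (\<lambda>p. f (fst p) * g (snd p))"
proof (rule Fubini_integrable)
  have [measurable]: "f \<in> borel_measurable M1" "g \<in> borel_measurable M2"
    using f g by auto
  show "(\<lambda>p. f (fst p) * g (snd p)) \<in> borel_measurable (M1 \<Otimes>\<^sub>M M2)"
    by measurable
  have "integrable M1 (\<lambda>x. \<bar>f x\<bar> * (\<integral>y. \<bar>g y\<bar> \<partial>M2))"
    using f by (intro integrable_mult_left integrable_abs)
  then show "integrable M1 (\<lambda>x. \<integral>y. norm (f (fst (x, y)) * g (snd (x, y))) \<partial>M2)"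
    by (simp add: abs_mult)
  show "AE x in M1. integrable M2 (\<lambda>y. f (fst (x, y)) * g (snd (x, y)))"
    using g by (auto intro!: integrable_mult_right)
qed

lemma (in pair_sigma_finite) integral_mult_fst_snd:
  fixes f g :: "_ \<Rightarrow> real"
  assumes "integrable M1 f" and "integrable M2 g"
  shows "(\<integral>p. f (fst p) * g (snd p) \<partial>(M1 \<Otimes>\<^sub>M M2)) = integral\<^sup>L M1 f * integral\<^sup>L M2 g"
  using integral_fst'[OF integrable_mult_fst_snd[OF assms]] by simp

lemma L2_2_pair_measure:
  assumes "L2_2 X"
  shows "X \<in> borel_measurable (lborel \<Otimes>\<^sub>M lborel)"
    and "integrable (lborel \<Otimes>\<^sub>M lborel) (\<lambda>p. (X p)^2)"
  using assms unfolding L2_2_def lborel_prod by auto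

lemma L2_scale:
  assumes "L2 u"
  shows "L2 (\<lambda>x. c * u x)"
  using assms unfolding L2_def by (auto simp: power_mult_distrib)

lemma L2_integral_square_eq_0_iff:
  assumes "L2 u"
  shows "(LINT x|lborel. (u x)^2) = 0 \<longleftrightarrow> (AE x in lborel. u x = 0)"
  using assms integral_nonneg_eq_0_iff_AE[of lborel "\<lambda>x. (u x)^2"] unfolding L2_def by auto

lemma abs_mult_le_sum_squares:
  fixes a b :: "'a::linordered_field"
  shows "\<bar>a * b\<bar> \<le> a^2 + b^2"
proof -
  have "2 * \<bar>a\<bar> * \<bar>b\<bar> \<le> a^2 + b^2"
    using sum_squares_bound[of "\<bar>a\<bar>" "\<bar>b\<bar>"] by simp
  moreover have "0 \<le> \<bar>a\<bar> * \<bar>b\<bar>" by simp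
  ultimately show ?thesis unfolding abs_mult by linarith
qed

lemma integrable_kernel_form:
  assumes X: "L2_2 X" and u: "L2 u"
  shows "integrable (lborel \<Otimes>\<^sub>M lborel) (\<lambda>p. X p * u (fst p) * u (snd p))"
proof (rule Bochner_Integration.integrable_bound)
  have [measurable]: "X \<in> borel_measurable (lborel \<Otimes>\<^sub>M lborel)" "u \<in> borel_measurable lborel"
    using L2_2_pair_measure[OF X] u unfolding L2_def by auto
  have "integrable (lborel \<Otimes>\<^sub>M lborel) (\<lambda>p. (u (fst p))^2 * (u (snd p))^2)"
    using u unfolding L2_def by (intro lborel_pair.integrable_mult_fst_snd) auto
  then show "integrable (lborel \<Otimes>\<^sub>M lborel) (\<lambda>p. (X p)^2 + (u (fst p))^2 * (u (snd p))^2)"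
    using L2_2_pair_measure(2)[OF X] by auto
  show "(\<lambda>p. X p * u (fst p) * u (snd p)) \<in> borel_measurable (lborel \<Otimes>\<^sub>M lborel)"
    by measurable
  show "AE p in lborel \<Otimes>\<^sub>M lborel. norm (X p * u (fst p) * u (snd p))
      \<le> norm ((X p)^2 + (u (fst p))^2 * (u (snd p))^2)"
    using abs_mult_le_sum_squares[of "X p" "u (fst p) * u (snd p)" for p]
    by (simp add: power_mult_distrib mult.assoc)
qed

lemma inner_T_op_eq_kernel_form:
  assumes X: "L2_2 X" and u: "L2 u"
  shows "integrable lborel (\<lambda>s. u s * T_op X u s)"
    and "inner_L2 u (T_op X u) = kernel_form X u"
proof -
  have eq: "u s * T_op X u s = (LINT t|lborel. X (s, t) * u (fst (s, t)) * u (snd (s, t)))" for s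
    unfolding T_op_def integral_mult_right_zero[symmetric] by (simp only: fst_conv snd_conv ac_simps)
  note I = integrable_kernel_form[OF X u]
  show "integrable lborel (\<lambda>s. u s * T_op X u s)"
    unfolding eq using lborel_pair.integrable_fst'[OF I] by simp
  show "inner_L2 u (T_op X u) = kernel_form X u"
    unfolding inner_L2_def kernel_form_def eq using lborel_pair.integral_fst'[OF I] by simp
qed

lemma inner_T_adj_eq_kernel_form:
  assumes X: "L2_2 X" and u: "L2 u"
  shows "integrable lborel (\<lambda>t. u t * T_adj X u t)"
    and "inner_L2 u (T_adj X u) = kernel_form X u"
proof -
  have eq: "u t * T_adj X u t = (LINT s|lborel. X (s, t) * u s * u t)" for t
    unfolding T_adj_def integral_mult_right_zero[symmetric] by (simp only: ac_simps)
  have I: "integrable (lborel \<Otimes>\<^sub>M lborel) (\<lambda>(s, t). X (s, t) * u s * u t)"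
    using integrable_kernel_form[OF X u] by (simp add: case_prod_beta')
  show "integrable lborel (\<lambda>t. u t * T_adj X u t)"
    unfolding eq using lborel_pair.integrable_snd[OF I] by simp
  have "kernel_form X u = (LINT p|(lborel \<Otimes>\<^sub>M lborel). (\<lambda>(s, t). X (s, t) * u s * u t) p)"
    unfolding kernel_form_def by (simp add: case_prod_beta')
  then show "inner_L2 u (T_adj X u) = kernel_form X u"
    unfolding inner_L2_def eq using lborel_pair.integral_snd[OF I] by simp
qed

lemma obj2_eq_kernel_form:
  assumes X: "L2_2 X" and u: "L2 u"
  shows "obj2 X u = 2 * kernel_form X u"
proof -
  have "obj2 X u = (LINT s|lborel. u s * T_op X u s + u s * T_adj X u s)"
    unfolding obj2_def inner_L2_def by (simp add: distrib_left)
  also have "\<dots> = inner_L2 u (T_op X u) + inner_L2 u (T_adj X u)"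
    unfolding inner_L2_def
    using inner_T_op_eq_kernel_form(1)[OF X u] inner_T_adj_eq_kernel_form(1)[OF X u]
    by (rule Bochner_Integration.integral_add)
  finally show ?thesis
    using inner_T_op_eq_kernel_form(2)[OF X u] inner_T_adj_eq_kernel_form(2)[OF X u] by simp
qed

lemma obj1_eq_kernel_form:
  assumes X: "L2_2 X" and u: "L2 u"
  shows "obj1 X u = (LINT p|lborel. (X p)^2) / 2 - kernel_form X u + (LINT x|lborel. (u x)^2)^2 / 2"
proof -
  have [measurable]: "X \<in> borel_measurable (lborel \<Otimes>\<^sub>M lborel)" "u \<in> borel_measurable lborel"
    using L2_2_pair_measure(1)[OF X] u unfolding L2_def by auto
  let ?P = "lborel \<Otimes>\<^sub>M lborel :: (real \<times> real) measure"
  let ?uu = "\<lambda>p. (u (fst p))^2 * (u (snd p))^2"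
  have iX: "integrable ?P (\<lambda>p. (X p)^2)" by (rule L2_2_pair_measure(2)[OF X])
  have iQ: "integrable ?P (\<lambda>p. 2 * (X p * u (fst p) * u (snd p)))"
    using integrable_kernel_form[OF X u] by auto
  have iu: "integrable lborel (\<lambda>x. (u x)^2)" using u unfolding L2_def by auto
  have iuu: "integrable ?P ?uu" by (rule lborel_pair.integrable_mult_fst_snd[OF iu iu])
  have sq: "(X p - outer u p)^2 = ((X p)^2 - 2 * (X p * u (fst p) * u (snd p))) + ?uu p" for p
    unfolding outer_def by (simp add: case_prod_beta power2_eq_square algebra_simps)
  have "(norm_L2_2 (\<lambda>p. X p - outer u p))^2 = (LINT p|?P. (X p - outer u p)^2)"
    unfolding norm_L2_2_def lborel_prod by simp
  also have "\<dots> = (LINT p|?P. (X p)^2) - 2 * kernel_form X u + (LINT p|?P. ?uu p)"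
    unfolding sq kernel_form_def
    by (simp add: Bochner_Integration.integral_add[OF Bochner_Integration.integrable_diff[OF iX iQ] iuu]
        Bochner_Integration.integral_diff[OF iX iQ])
  also have "(LINT p|?P. ?uu p) = (LINT x|lborel. (u x)^2)^2"
    using lborel_pair.integral_mult_fst_snd[OF iu iu] by (simp add: power2_eq_square)
  finally show ?thesis unfolding obj1_def lborel_prod by simp
qed

lemma kernel_form_scale: "kernel_form X (\<lambda>x. c * u x) = c^2 * kernel_form X u"
  unfolding kernel_form_def by (simp add: power2_eq_square ac_simps)

lemma kernel_form_eq_0_if_AE_zero:
  assumes X: "L2_2 X" and u: "L2 u" and zero: "AE x in lborel. u x = 0"
  shows "kernel_form X u = 0"
proof -
  have "AE s in lborel. u s * T_op X u s = 0" using zero by auto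
  then show ?thesis
    using inner_T_op_eq_kernel_form(2)[OF X u] integral_eq_zero_AE unfolding inner_L2_def by metis
qed

lemma outer_scale: "outer (\<lambda>x. c * u x) p = c^2 * outer u p"
  unfolding outer_def by (simp add: case_prod_beta power2_eq_square ac_simps)

lemma is_max2_kernel_form_bound:
  assumes X: "L2_2 X" and u: "is_max2 X u" and w: "L2 w"
  shows "kernel_form X w \<le> kernel_form X u * (LINT x|lborel. (w x)^2)"
proof (cases "(LINT x|lborel. (w x)^2) = 0")
  case True
  then show ?thesis
    using kernel_form_eq_0_if_AE_zero[OF X w] L2_integral_square_eq_0_iff[OF w] by simp
next
  case False
  define m where "m = (LINT x|lborel. (w x)^2)"
  have m: "0 < m"
    using False unfolding m_def by (simp add: less_le)
  define w1 where "w1 = (\<lambda>x. (1 / sqrt m) * w x)"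
  have w1: "L2 w1"
    unfolding w1_def by (rule L2_scale[OF w])
  moreover have "norm_L2 w1 = 1"
    using m unfolding norm_L2_def w1_def by (simp add: power_mult_distrib power_divide m_def[symmetric])
  ultimately have "obj2 X w1 \<le> obj2 X u"
    using u unfolding is_max2_def by blast
  moreover have "obj2 X w1 = 2 * (kernel_form X w / m)"
    using m unfolding obj2_eq_kernel_form[OF X w1] unfolding w1_def kernel_form_scale
    by (simp add: power_divide)
  moreover have "obj2 X u = 2 * kernel_form X u"
    using obj2_eq_kernel_form[OF X] u unfolding is_max2_def by blast
  ultimately have "kernel_form X w / m \<le> kernel_form X u"
    by simp
  then show ?thesis
    using m by (simp add: m_def divide_le_eq mult.commute)
qed

lemma is_max2_kernel_form_nonneg:
  assumes X: "L2_2 X" and u: "is_max2 X u"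
    and v: "L2 v" "\<not> (AE x in lborel. v x = 0)" "0 \<le> kernel_form X v"
  shows "0 \<le> kernel_form X u"
proof -
  have "0 < (LINT x|lborel. (v x)^2)"
    using L2_integral_square_eq_0_iff[OF v(1)] v(2) by (simp add: less_le)
  moreover have "0 \<le> kernel_form X u * (LINT x|lborel. (v x)^2)"
    using is_max2_kernel_form_bound[OF X u v(1)] v(3) by linarith
  ultimately show ?thesis
    by (simp add: zero_le_mult_iff)
qed

lemma is_min1_scaled_maximizer:
  assumes X: "L2_2 X" and u: "is_max2 X u" and nonneg: "0 \<le> kernel_form X u"
  shows "is_min1 X (\<lambda>x. sqrt (kernel_form X u) * u x)"
proof -
  define a where "a = kernel_form X u"
  define S where "S = (LINT p|lborel. (X p)^2)"
  have uL2: "L2 u" and u1: "(LINT x|lborel. (u x)^2) = 1"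
    using u unfolding is_max2_def norm_L2_def by auto
  have wL2: "L2 (\<lambda>x. sqrt a * u x)"
    by (rule L2_scale[OF uL2])
  have sqrt_a: "(sqrt a)^2 = a"
    using nonneg unfolding a_def by simp
  have "(LINT x|lborel. (sqrt a * u x)^2) = a"
    using u1 by (simp add: power_mult_distrib sqrt_a)
  then have "obj1 X (\<lambda>x. sqrt a * u x) = S / 2 - a^2 / 2"
    unfolding obj1_eq_kernel_form[OF X wL2] kernel_form_scale sqrt_a S_def a_def[symmetric]
    by (simp add: power2_eq_square)
  moreover have "S / 2 - a^2 / 2 \<le> obj1 X w" if w: "L2 w" for w
  proof -
    define m where "m = (LINT x|lborel. (w x)^2)"
    have "kernel_form X w \<le> a * m"
      using is_max2_kernel_form_bound[OF X u w] unfolding a_def m_def .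
    moreover have "a * m \<le> a^2 / 2 + m^2 / 2"
      using sum_squares_bound[of a m] by simp
    ultimately show ?thesis
      unfolding obj1_eq_kernel_form[OF X w] S_def m_def by linarith
  qed
  ultimately show ?thesis
    using wL2 unfolding is_min1_def a_def by auto
qed

theorem mainTheorem20:
  fixes X :: "real \<times> real \<Rightarrow> real" and v u :: "real \<Rightarrow> real"
  assumes "L2_2 X"
    and "L2 v" and "\<not> (AE x in lborel. v x = 0)"
    and "inner_L2 v (T_op X v) \<ge> 0"
    and "is_max2 X u"
  shows "\<exists>w. is_min1 X w \<and>
    (AE p in lborel. ((1/2) * obj2 X u) * outer u p = outer w p)"
proof -
  define a where "a = kernel_form X u"
  have "L2 u"
    using assms(5) unfolding is_max2_def by blast
  have "0 \<le> a"
    using is_max2_kernel_form_nonneg[OF assms(1,5,2,3)] assms(4)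
    unfolding a_def inner_T_op_eq_kernel_form(2)[OF assms(1,2)] .
  then have "(1/2) * obj2 X u * outer u p = outer (\<lambda>x. sqrt a * u x) p" for p
    unfolding outer_scale obj2_eq_kernel_form[OF assms(1) \<open>L2 u\<close>] a_def by simp
  moreover have "is_min1 X (\<lambda>x. sqrt a * u x)"
    using is_min1_scaled_maximizer[OF assms(1,5)] \<open>0 \<le> a\<close> unfolding a_def .
  ultimately show ?thesis
    by blast
qed

end
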